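(* Let $X$ be an element of the tensor algebra over $\mathbb{R}^d$ with strictly positive radius of convergence $\rho(X)>0$, and suppose $\pi_n(X)\neq 0$ for some $n\ge 0$. Then for every integer $k\ge n+1$ there exists a linear map $M\in\mathcal{L}(\mathbb{R}^d;\mathfrak{t}(k,\mathbb{R}))$ such that the series defining $\Phi_X(M)$ converges and $\Phi_X(M)\neq 0$.
   Context: Elements of the tensor algebra are (formal) sequences $X=(\pi_0(X),\pi_1(X),\dots)$ with $\pi_n(X)\in(\mathbb{R}^d)^{\otimes n}$, $(\mathbb{R}^d)^{\otimes0}=\mathbb{R}$. $\mathbb{R}^d$ carries the $\ell_1$-norm and each $(\mathbb{R}^d)^{\otimes n}$ the projective tensor norm. The radius of convergence $\rho(X)$ is the radius of convergence of the complex power series $\lambda\mapsto\sum_{n\ge0}\|\pi_n(X)\|\lambda^n$. $\mathfrak{t}(k,\mathbb{R})$ is the space of real $k\times k$ matrices $M$ with $M+M^\top=0$ whose $(i,j)$-entry can be nonzero only if $|i-j|=1$ (tridiagonal antisymmetric matrices). For a linear map $M:\mathbb{R}^d\to\mathfrak{t}(k,\mathbb{R})\subset\mathfrak{gl}(k,\mathbb{C})$, $\widetilde M$ is the algebra homomorphism with $\widetilde M(1)=I_k$ and $\widetilde M(e_{i_1}\otimes\cdots\otimes e_{i_\ell})=M(e_{i_1})\cdots M(e_{i_\ell})$, and the generating function is $\Phi_X(M)=\sum_{n\ge0}\widetilde M(\pi_n(X))$ (Hilbert–Schmidt norm on matrices), defined when this series converges. *)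

theory Defs
  imports "HOL-Analysis.Analysis"
begin

text \<open>The basis of (R^d)^{tensor n} is indexed by words
  w of length n over the alphabet {0..<d}; a tensor of degree n is represented by
  its coefficient function on such words. An element X of the tensor algebra is
  represented by a coefficient function on all words; pi_n(X) is its restriction to
  words of length n.\<close>

definition words :: "nat \<Rightarrow> nat \<Rightarrow> nat list set" where
  "words d n = {w. length w = n \<and> set w \<subseteq> {..<d}}"

definition l1norm :: "nat \<Rightarrow> (nat \<Rightarrow> real) \<Rightarrow> real" where
  "l1norm d x = (\<Sum>i<d. \<bar>x i\<bar>)"

definition proj_norm :: "nat \<Rightarrow> nat \<Rightarrow> (nat list \<Rightarrow> real) \<Rightarrow> real" where
  "proj_norm d n T = Inf {(\<Sum>j<r. \<bar>c j\<bar> * (\<Prod>m<n. l1norm d (v j m))) | (r::nat) c v.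
      \<forall>w\<in>words d n. T w = (\<Sum>j<r. c j * (\<Prod>m<n. v j m (w ! m)))}"

definition radius :: "nat \<Rightarrow> (nat list \<Rightarrow> real) \<Rightarrow> ereal" where
  "radius d X = conv_radius (\<lambda>n. complex_of_real (proj_norm d n X))"

text \<open>k x k real matrices as functions on {0..<k} x {0..<k}.\<close>
definition matmul :: "nat \<Rightarrow> (nat \<Rightarrow> nat \<Rightarrow> real) \<Rightarrow> (nat \<Rightarrow> nat \<Rightarrow> real) \<Rightarrow> nat \<Rightarrow> nat \<Rightarrow> real" where
  "matmul k A B = (\<lambda>i j. \<Sum>l<k. A i l * B l j)"

definition matid :: "nat \<Rightarrow> nat \<Rightarrow> real" where
  "matid = (\<lambda>i j. if i = j then 1 else 0)"

definition hs_norm :: "nat \<Rightarrow> (nat \<Rightarrow> nat \<Rightarrow> real) \<Rightarrow> real" where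
  "hs_norm k A = sqrt (\<Sum>i<k. \<Sum>j<k. (A i j)\<^sup>2)"

definition in_t :: "nat \<Rightarrow> (nat \<Rightarrow> nat \<Rightarrow> real) \<Rightarrow> bool" where
  "in_t k A \<longleftrightarrow> (\<forall>a<k. \<forall>b<k. A a b + A b a = 0 \<and>
                       (A a b \<noteq> 0 \<longrightarrow> a = b + 1 \<or> b = a + 1))"

text \<open>A linear map M : R^d -> t(k,R) is given by the images M i of the basis vectors e_i, i<d.\<close>
definition lin_to_t :: "nat \<Rightarrow> nat \<Rightarrow> (nat \<Rightarrow> nat \<Rightarrow> nat \<Rightarrow> real) \<Rightarrow> bool" where
  "lin_to_t d k M \<longleftrightarrow> (\<forall>i<d. in_t k (M i))"

text \<open>M~(e_{i1} tensor ... tensor e_{il}) = M(e_{i1}) ... M(e_{il}), M~(1) = I_k.\<close>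
definition word_mat :: "nat \<Rightarrow> (nat \<Rightarrow> nat \<Rightarrow> nat \<Rightarrow> real) \<Rightarrow> nat list \<Rightarrow> nat \<Rightarrow> nat \<Rightarrow> real" where
  "word_mat k M w = foldr (\<lambda>a acc. matmul k (M a) acc) w matid"

definition Mtilde_pi :: "nat \<Rightarrow> nat \<Rightarrow> (nat \<Rightarrow> nat \<Rightarrow> nat \<Rightarrow> real) \<Rightarrow> (nat list \<Rightarrow> real) \<Rightarrow> nat \<Rightarrow> nat \<Rightarrow> nat \<Rightarrow> real" where
  "Mtilde_pi d k M X n = (\<lambda>i j. \<Sum>w\<in>words d n. X w * word_mat k M w i j)"

definition Phi_sums :: "nat \<Rightarrow> nat \<Rightarrow> (nat list \<Rightarrow> real) \<Rightarrow> (nat \<Rightarrow> nat \<Rightarrow> nat \<Rightarrow> real) \<Rightarrow> (nat \<Rightarrow> nat \<Rightarrow> real) \<Rightarrow> bool" where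
  "Phi_sums d k X M L \<longleftrightarrow>
     (\<lambda>N. hs_norm k (\<lambda>i j. (\<Sum>n<N. Mtilde_pi d k M X n i j) - L i j)) \<longlonglongrightarrow> 0"

end

theory Submission
  imports Defs "HOL-Complex_Analysis.Cauchy_Integral_Formula"
begin

(* Pick a word w0 of length n with X w0 \<noteq> 0 and let M send e_a to the sum of
   E_(i,i+1) - E_(i+1,i) over the positions i < n with w0 ! i = a. A product M(e_(a_1)) ... M(e_(a_n))
   has (0, n) entry 1 if a_1 ... a_n = w0 and 0 otherwise, so the (0, n) entry of the generating
   function of X at t M is a real power series in t whose coefficient of t^n is X w0 \<noteq> 0.
   Entries of M~(pi_m X) are bounded by (k d)^m times the projective norm of pi_m X, so this
   series converges for small t, and by the isolated zeros of power series it is nonzero at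
   some small t. *)

lemma conv_radius_pos_summable:
  fixes a :: "nat \<Rightarrow> 'a::{banach, real_normed_div_algebra}"
  assumes "0 < conv_radius a"
  obtains r where "0 < r" and "summable (\<lambda>m. norm (a m) * r ^ m)"
proof -
  obtain r where r: "0 < ereal r" "ereal r < conv_radius a"
    using ereal_dense2[OF assms] by blast
  then have "summable (\<lambda>m. norm (a m * of_real r ^ m))"
    by (intro abs_summable_in_conv_radius) simp
  with r show ?thesis
    using that by (simp add: norm_mult norm_power)
qed

lemma powser_nonzero_near_0:
  fixes c :: "nat \<Rightarrow> 'a::{real_normed_field, banach}"
  assumes "0 < R" and summable: "\<And>x. norm x < R \<Longrightarrow> summable (\<lambda>m. c m * x ^ m)"
    and "c n \<noteq> 0"
  obtains t where "norm t < R" and "(\<Sum>m. c m * t ^ m) \<noteq> 0"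
proof (cases "c 0 = 0")
  case False
  then show ?thesis using that[of 0] assms(1) by (simp add: powser_zero)
next
  case True
  with \<open>c n \<noteq> 0\<close> have "0 < n" by (cases n) auto
  have sums: "(\<lambda>m. c m * (x - 0) ^ m) sums (\<Sum>m. c m * x ^ m)" if "norm (x - 0) < R" for x
    using summable[of x] that by (simp add: summable_sums)
  have "(\<Sum>m. c m * 0 ^ m) = 0"
    using True by (simp add: powser_zero)
  then obtain s where "0 < s" and nonzero: "\<And>z. z \<in> cball 0 s - {0} \<Longrightarrow> (\<Sum>m. c m * z ^ m) \<noteq> 0"
    using powser_0_nonzero[OF \<open>0 < R\<close> sums _ \<open>c n \<noteq> 0\<close> \<open>0 < n\<close>] by blast
  let ?t = "of_real (min s (R / 2)) :: 'a"
  show ?thesis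
    using that[of ?t] nonzero[of ?t] \<open>0 < s\<close> \<open>0 < R\<close> by auto
qed

lemma finite_words: "finite (words d n)"
  unfolding words_def using finite_lists_length_eq[of "{..<d}" n] by (simp add: conj_commute)

lemma card_words: "card (words d n) = d ^ n"
  unfolding words_def using card_lists_length_eq[of "{..<d}" n] by (simp add: conj_commute)

lemma prod_indicator_nth_eq:
  assumes "length u = n" "length w = n"
  shows "(\<Prod>m<n. if u ! m = w ! m then 1 else 0 :: real) = (if u = w then 1 else 0)"
  using assms by (auto simp: list_eq_iff_nth_eq)

lemma ex_elementary_tensor_sum:
  fixes T :: "nat list \<Rightarrow> real"
  shows "\<exists>(r::nat) c v. \<forall>w\<in>words d n. T w = (\<Sum>j<r. c j * (\<Prod>m<n. v j m (w ! m)))"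
proof -
  obtain h where h: "bij_betw h {..<card (words d n)} (words d n)"
    using ex_bij_betw_nat_finite[OF finite_words] by (auto simp: atLeast0LessThan)
  have rep: "T w = (\<Sum>j<card (words d n). T (h j) * (\<Prod>m<n. if h j ! m = w ! m then 1 else 0))"
    if w: "w \<in> words d n" for w
  proof -
    have "(\<Sum>j<card (words d n). T (h j) * (\<Prod>m<n. if h j ! m = w ! m then 1 else 0))
        = (\<Sum>u\<in>words d n. T u * (\<Prod>m<n. if u ! m = w ! m then 1 else 0))"
      by (rule sum.reindex_bij_betw[OF h])
    also have "\<dots> = (\<Sum>u\<in>words d n. if u = w then T u else 0)"
    proof (intro sum.cong refl)
      fix u assume "u \<in> words d n"
      then show "T u * (\<Prod>m<n. if u ! m = w ! m then 1 else 0) = (if u = w then T u else 0)"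
        using w prod_indicator_nth_eq[of u n w] by (simp add: words_def)
    qed
    also have "\<dots> = T w"
      using w finite_words by (simp add: sum.delta')
    finally show ?thesis by simp
  qed
  show ?thesis
    by (intro exI[of _ "card (words d n)"] exI[of _ "\<lambda>j. T (h j)"]
        exI[of _ "\<lambda>j m i. if h j ! m = i then 1 else 0"] ballI rep)
qed

lemma abs_le_elementary_tensor_sum_norm:
  assumes w: "w \<in> words d n"
    and rep: "T w = (\<Sum>j<r. c j * (\<Prod>m<n. v j m (w ! m)))"
  shows "\<bar>T w\<bar> \<le> (\<Sum>j<r. \<bar>c j\<bar> * (\<Prod>m<n. l1norm d (v j m)))"
proof -
  have coord_le: "\<bar>v j m (w ! m)\<bar> \<le> l1norm d (v j m)" if "m < n" for j m
  proof -
    have "w ! m < d" using w that by (auto simp: words_def dest!: nth_mem)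
    then show ?thesis
      unfolding l1norm_def by (intro member_le_sum[where f="\<lambda>i. \<bar>v j m i\<bar>"]) auto
  qed
  have "\<bar>T w\<bar> \<le> (\<Sum>j<r. \<bar>c j\<bar> * (\<Prod>m<n. \<bar>v j m (w ! m)\<bar>))"
    unfolding rep by (rule order.trans[OF sum_abs]) (simp add: abs_mult abs_prod)
  also have "\<dots> \<le> (\<Sum>j<r. \<bar>c j\<bar> * (\<Prod>m<n. l1norm d (v j m)))"
    by (intro sum_mono mult_left_mono prod_mono conjI coord_le) auto
  finally show ?thesis .
qed

lemma abs_le_proj_norm:
  assumes "w \<in> words d n"
  shows "\<bar>T w\<bar> \<le> proj_norm d n T"
  unfolding proj_norm_def
proof (rule cInf_greatest)
  obtain r :: nat and c v where "\<forall>u\<in>words d n. T u = (\<Sum>j<r. c j * (\<Prod>m<n. v j m (u ! m)))"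
    using ex_elementary_tensor_sum by blast
  then show "{(\<Sum>j<r. \<bar>c j\<bar> * (\<Prod>m<n. l1norm d (v j m))) | (r::nat) c v.
      \<forall>w\<in>words d n. T w = (\<Sum>j<r. c j * (\<Prod>m<n. v j m (w ! m)))} \<noteq> {}"
    by blast
qed (use assms abs_le_elementary_tensor_sum_norm in blast)

lemma word_mat_Nil [simp]: "word_mat k M [] = matid"
  by (simp add: word_mat_def)

lemma word_mat_Cons [simp]: "word_mat k M (a # w) = matmul k (M a) (word_mat k M w)"
  by (simp add: word_mat_def)

lemma word_mat_scale:
  "word_mat k (\<lambda>a i j. t * M a i j) w i j = t ^ length w * word_mat k M w i j"
  by (induction w arbitrary: i j) (simp_all add: matmul_def sum_distrib_left mult_ac)

lemma abs_word_mat_le: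
  assumes "\<And>a i j. \<bar>M a i j\<bar> \<le> 1"
  shows "\<bar>word_mat k M w i j\<bar> \<le> real k ^ length w"
proof (induction w arbitrary: i j)
  case (Cons a w)
  have "\<bar>matmul k (M a) (word_mat k M w) i j\<bar> \<le> (\<Sum>q<k. \<bar>M a i q * word_mat k M w q j\<bar>)"
    unfolding matmul_def by (rule sum_abs)
  also have "\<dots> \<le> (\<Sum>q<k. 1 * real k ^ length w)"
    unfolding abs_mult by (intro sum_mono mult_mono assms Cons.IH) auto
  finally show ?case by simp
qed (simp add: matid_def)

lemma word_mat_eq_0_above_band:
  assumes "\<And>a i q. M a i q \<noteq> 0 \<Longrightarrow> q \<le> Suc i" and "i + length w < j"
  shows "word_mat k M w i j = 0"
  using assms(2)
proof (induction w arbitrary: i)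
  case (Cons a w)
  have "M a i q * word_mat k M w q j = 0" for q
    using assms(1)[of a i q] Cons by fastforce
  then show ?case by (auto simp: matmul_def intro!: sum.neutral)
qed (simp add: matid_def)

lemma Mtilde_pi_scale:
  "Mtilde_pi d k (\<lambda>a i j. t * M a i j) X m i j = t ^ m * Mtilde_pi d k M X m i j"
  by (simp add: Mtilde_pi_def word_mat_scale words_def sum_distrib_left mult_ac)

lemma abs_Mtilde_pi_le:
  assumes "\<And>a i j. \<bar>M a i j\<bar> \<le> 1"
  shows "\<bar>Mtilde_pi d k M X m i j\<bar> \<le> (real k * real d) ^ m * \<bar>proj_norm d m X\<bar>"
proof -
  have "\<bar>X w * word_mat k M w i j\<bar> \<le> \<bar>proj_norm d m X\<bar> * real k ^ m" if "w \<in> words d m" for w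
  proof -
    have "\<bar>X w\<bar> \<le> \<bar>proj_norm d m X\<bar>"
      using abs_le_proj_norm[OF that, of X] by linarith
    moreover have "\<bar>word_mat k M w i j\<bar> \<le> real k ^ m"
      using that abs_word_mat_le[where M=M, OF assms, of k w i j] by (simp add: words_def)
    ultimately show ?thesis
      unfolding abs_mult by (intro mult_mono) auto
  qed
  then have "\<bar>Mtilde_pi d k M X m i j\<bar> \<le> (\<Sum>w\<in>words d m. \<bar>proj_norm d m X\<bar> * real k ^ m)"
    unfolding Mtilde_pi_def by (intro order.trans[OF sum_abs] sum_mono)
  also have "\<dots> = (real k * real d) ^ m * \<bar>proj_norm d m X\<bar>"
    by (simp add: card_words power_mult_distrib)
  finally show ?thesis .
qed

definition path_mat :: "nat list \<Rightarrow> nat \<Rightarrow> nat \<Rightarrow> nat \<Rightarrow> real" where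
  "path_mat w0 a i j =
     (if j = Suc i \<and> i < length w0 \<and> w0 ! i = a then 1
      else if i = Suc j \<and> j < length w0 \<and> w0 ! j = a then -1 else 0)"

lemma in_t_path_mat: "in_t k (path_mat w0 a)"
  by (auto simp: in_t_def path_mat_def)

lemma abs_path_mat_le: "\<bar>path_mat w0 a i j\<bar> \<le> 1"
  by (simp add: path_mat_def)

lemma path_mat_neq_0_imp: "path_mat w0 a i j \<noteq> 0 \<Longrightarrow> j \<le> Suc i"
  by (auto simp: path_mat_def split: if_splits)

lemma word_mat_path_mat:
  assumes "p + length w \<le> length w0" and "length w0 < k"
  shows "word_mat k (path_mat w0) w p (p + length w) =
           (if \<forall>m<length w. w ! m = w0 ! (p + m) then 1 else 0)"
  using assms(1)
proof (induction w arbitrary: p)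
  case (Cons a w)
  let ?W = "word_mat k (path_mat w0) w"
  have other_steps_vanish: "path_mat w0 a p q * ?W q (Suc (p + length w)) = 0" if "q \<noteq> Suc p" for q
  proof (cases "path_mat w0 a p q = 0")
    case False
    then have "p = Suc q" using that by (auto simp: path_mat_def split: if_splits)
    then show ?thesis
      by (simp add: word_mat_eq_0_above_band[OF path_mat_neq_0_imp])
  qed simp
  have "Suc p \<in> {..<k}" using Cons.prems assms(2) by simp
  then have "word_mat k (path_mat w0) (a # w) p (p + length (a # w))
      = path_mat w0 a p (Suc p) * ?W (Suc p) (Suc p + length w)"
    unfolding word_mat_Cons matmul_def
    by (simp add: sum.remove[of _ "Suc p"] sum.neutral other_steps_vanish)
  also have "\<dots> = (if w0 ! p = a then 1 else 0) *
      (if \<forall>m<length w. w ! m = w0 ! (Suc p + m) then 1 else 0)"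
    using Cons.IH[of "Suc p"] Cons.prems by (simp add: path_mat_def[of w0 a p])
  finally show ?case by (auto simp: less_Suc_eq_0_disj)
qed (simp add: matid_def)

lemma Mtilde_pi_path_mat:
  assumes w0: "w0 \<in> words d n" and "n < k"
  shows "Mtilde_pi d k (path_mat w0) X n 0 n = X w0"
proof -
  have "X w * word_mat k (path_mat w0) w 0 n = (if w = w0 then X w else 0)"
    if "w \<in> words d n" for w
    using that w0 assms(2) word_mat_path_mat[of 0 w w0 k]
    by (auto simp: words_def list_eq_iff_nth_eq)
  then have "Mtilde_pi d k (path_mat w0) X n 0 n = (\<Sum>w\<in>words d n. if w = w0 then X w else 0)"
    unfolding Mtilde_pi_def by (intro sum.cong) auto
  also have "\<dots> = X w0" using w0 finite_words by simp
  finally show ?thesis .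
qed

lemma in_t_scale: "in_t k A \<Longrightarrow> in_t k (\<lambda>i j. t * A i j)"
  by (auto simp: in_t_def simp flip: distrib_left)

lemma summable_Mtilde_pi_scale:
  assumes "\<And>a i j. \<bar>M a i j\<bar> \<le> 1"
    and summable: "summable (\<lambda>m. \<bar>proj_norm d m X\<bar> * r ^ m)"
    and t: "\<bar>t\<bar> * (real k * real d) \<le> r"
  shows "summable (\<lambda>m. Mtilde_pi d k (\<lambda>a i j. t * M a i j) X m i j)"
proof (rule summable_comparison_test'[OF summable])
  fix m
  have "\<bar>Mtilde_pi d k (\<lambda>a i j. t * M a i j) X m i j\<bar> = \<bar>t\<bar> ^ m * \<bar>Mtilde_pi d k M X m i j\<bar>"
    by (simp add: Mtilde_pi_scale abs_mult power_abs)
  also have "\<dots> \<le> \<bar>t\<bar> ^ m * ((real k * real d) ^ m * \<bar>proj_norm d m X\<bar>)"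
    by (intro mult_left_mono abs_Mtilde_pi_le assms(1)) simp
  also have "\<dots> = (\<bar>t\<bar> * (real k * real d)) ^ m * \<bar>proj_norm d m X\<bar>"
    by (simp add: power_mult_distrib)
  also have "\<dots> \<le> r ^ m * \<bar>proj_norm d m X\<bar>"
    by (intro mult_right_mono power_mono t) simp_all
  finally show "norm (Mtilde_pi d k (\<lambda>a i j. t * M a i j) X m i j) \<le> \<bar>proj_norm d m X\<bar> * r ^ m"
    by (simp add: mult.commute)
qed

lemma radius_pos_summable_Mtilde_pi_scale:
  assumes "0 < radius d X" and "\<And>a i j. \<bar>M a i j\<bar> \<le> 1"
  obtains R where "0 < R"
    and "\<And>t i j. \<bar>t\<bar> < R \<Longrightarrow> summable (\<lambda>m. Mtilde_pi d k (\<lambda>a i j. t * M a i j) X m i j)"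
proof -
  obtain r where "0 < r" and r: "summable (\<lambda>m. \<bar>proj_norm d m X\<bar> * r ^ m)"
    using conv_radius_pos_summable[of "\<lambda>m. complex_of_real (proj_norm d m X)"] assms(1)
    by (auto simp: radius_def)
  have kd_pos: "0 < real k * real d + 1"
    by (auto intro: add_nonneg_pos)
  show ?thesis
  proof
    show "0 < r / (real k * real d + 1)"
      using \<open>0 < r\<close> kd_pos by simp
    fix t :: real and i j
    assume "\<bar>t\<bar> < r / (real k * real d + 1)"
    then have "\<bar>t\<bar> * (real k * real d) \<le> r / (real k * real d + 1) * (real k * real d + 1)"
      by (intro mult_mono) auto
    then show "summable (\<lambda>m. Mtilde_pi d k (\<lambda>a i j. t * M a i j) X m i j)"
      using kd_pos by (intro summable_Mtilde_pi_scale[OF assms(2) r]) simp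
  qed
qed

lemma Phi_sums_entrywise:
  assumes "\<And>i j. (\<lambda>m. Mtilde_pi d k M X m i j) sums L i j"
  shows "Phi_sums d k X M L"
proof -
  have "(\<lambda>N. hs_norm k (\<lambda>i j. (\<Sum>m<N. Mtilde_pi d k M X m i j) - L i j))
      \<longlonglongrightarrow> sqrt (\<Sum>i<k. \<Sum>j<k. (L i j - L i j)\<^sup>2)"
    unfolding hs_norm_def using assms[unfolded sums_def] by (intro tendsto_intros)
  then show ?thesis by (simp add: Phi_sums_def)
qed

theorem corollary1p9:
  fixes d n k :: nat and X :: "nat list \<Rightarrow> real"
  assumes "radius d X > 0"
    and "\<exists>w\<in>words d n. X w \<noteq> 0"
    and "k \<ge> n + 1"
  shows "\<exists>M. lin_to_t d k M \<and>
           (\<exists>L. Phi_sums d k X M L \<and> (\<exists>i<k. \<exists>j<k. L i j \<noteq> 0))"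
proof -
  obtain w0 where w0: "w0 \<in> words d n" "X w0 \<noteq> 0" using assms(2) by blast
  have "n < k" using assms(3) by simp
  define A where "A = path_mat w0"
  obtain R where "0 < R" and summable:
    "\<And>t i j. \<bar>t\<bar> < R \<Longrightarrow> summable (\<lambda>m. Mtilde_pi d k (\<lambda>a i j. t * A a i j) X m i j)"
    using radius_pos_summable_Mtilde_pi_scale[OF assms(1)] by (metis A_def abs_path_mat_le)
  obtain t where "\<bar>t\<bar> < R" and t: "(\<Sum>m. Mtilde_pi d k A X m 0 n * t ^ m) \<noteq> 0"
  proof (rule powser_nonzero_near_0[OF \<open>0 < R\<close>])
    show "summable (\<lambda>m. Mtilde_pi d k A X m 0 n * x ^ m)" if "norm x < R" for x
      using summable[of x 0 n] that by (simp add: Mtilde_pi_scale mult.commute)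
    show "Mtilde_pi d k A X n 0 n \<noteq> 0"
      using Mtilde_pi_path_mat[OF w0(1) \<open>n < k\<close>] w0(2) by (simp add: A_def)
  qed auto
  define M where "M = (\<lambda>a i j. t * A a i j)"
  define L where "L i j = (\<Sum>m. Mtilde_pi d k M X m i j)" for i j
  have "lin_to_t d k M"
    by (simp add: lin_to_t_def M_def A_def in_t_scale in_t_path_mat)
  moreover have "Phi_sums d k X M L"
    using summable[OF \<open>\<bar>t\<bar> < R\<close>] unfolding L_def M_def
    by (intro Phi_sums_entrywise summable_sums)
  moreover have "L 0 n \<noteq> 0"
    using t by (simp add: L_def M_def Mtilde_pi_scale mult.commute)
  moreover have "0 < k" using \<open>n < k\<close> by simp
  ultimately show ?thesis using \<open>n < k\<close> by blast
qed

end
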